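(* Let $\mathcal{U}$ be a CFI on $X=[0,1]$ with slope interval $S$, let $u\in\mathcal{U}$, and suppose $I=[a,b]\subseteq X$ satisfies $\underline u<u<\bar u$ on $I$. Let $h_{a,b}$ be defined as in the context. Then for every $\varepsilon\in[0,1]$, both $u+\varepsilon h_{a,b}$ and $u-\varepsilon h_{a,b}$ are continuous convex functions on $X$ with $\partial(u\pm\varepsilon h_{a,b})(X)\subseteq S$. Furthermore, $h_{a,b}\equiv0$ on $X$ if and only if there exist three (not necessarily distinct) affine functions $\ell_0,\ell_1,\ell_2$ on $I$ with $u|_I=\max\{\ell_0,\ell_1,\ell_2\}$.
   Context: A CFI is $\mathcal{U}=\{u\in\mathcal{K}(X):\underline u\le u\le\bar u,\ \partial u(X)\subseteq S\}$ with $S=[\underline s,\bar s]$, $\underline u\le\bar u$ continuous convex with $\partial\underline u(X),\partial\bar u(X)\subseteq S$; $\mathcal{K}(X)$ is the set of continuous convex functions on $X$ and $\partial u(X)=\bigcup_{x\in\mathrm{int}X}\partial u(x)$. For $u\in\mathcal{K}(X)$ let $t_u(x;a^+)=u(a)+\partial_+u(a)(x-a)$ and $t_u(x;b^-)=u(b)+\partial_-u(b)(x-b)$. Define $g_{a,b}(x)=0$ for $x\notin[a,b]$ and $g_{a,b}(x)=u(x)-\max\{t_u(x;a^+),t_u(x;b^-)\}$ for $x\in[a,b]$. For a function $\phi$ on $X$, $\mathrm{vex}[\phi](x)=\sup\{g(x): g:X\to\mathbb{R}$ convex, $g\le\phi\}$ (convex envelope). Finally $h_{a,b}=\mathrm{vex}[u+g_{a,b}]-u$.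 *)

theory Defs
  imports "HOL-Analysis.Analysis"
begin

text \<open>The ambient domain X = [0,1]. Functions are real \<Rightarrow> real; only values on X matter.\<close>

abbreviation X :: "real set" where "X \<equiv> {0..1}"

definition cvx :: "(real \<Rightarrow> real) \<Rightarrow> bool" where
  "cvx u \<longleftrightarrow> continuous_on X u \<and> convex_on X u"

definition subdiff :: "(real \<Rightarrow> real) \<Rightarrow> real \<Rightarrow> real set" where
  "subdiff u x = {s. \<forall>y\<in>X. u y \<ge> u x + s * (y - x)}"

definition subdiff_X :: "(real \<Rightarrow> real) \<Rightarrow> real set" where
  "subdiff_X u = (\<Union>x\<in>{0<..<1}. subdiff u x)"

definition CFI :: "(real \<Rightarrow> real) \<Rightarrow> (real \<Rightarrow> real) \<Rightarrow> real \<Rightarrow> real \<Rightarrow> (real \<Rightarrow> real) set" where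
  "CFI lo hi s1 s2 = {u. cvx u \<and> (\<forall>x\<in>X. lo x \<le> u x \<and> u x \<le> hi x) \<and> subdiff_X u \<subseteq> {s1..s2}}"

definition CFI_data :: "(real \<Rightarrow> real) \<Rightarrow> (real \<Rightarrow> real) \<Rightarrow> real \<Rightarrow> real \<Rightarrow> bool" where
  "CFI_data lo hi s1 s2 \<longleftrightarrow> cvx lo \<and> cvx hi \<and> (\<forall>x\<in>X. lo x \<le> hi x)
     \<and> subdiff_X lo \<subseteq> {s1..s2} \<and> subdiff_X hi \<subseteq> {s1..s2}"

definition rderiv :: "(real \<Rightarrow> real) \<Rightarrow> real \<Rightarrow> real" where
  "rderiv u a = Lim (at_right a) (\<lambda>x. (u x - u a) / (x - a))"

definition lderiv :: "(real \<Rightarrow> real) \<Rightarrow> real \<Rightarrow> real" where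
  "lderiv u b = Lim (at_left b) (\<lambda>x. (u x - u b) / (x - b))"

definition t_right :: "(real \<Rightarrow> real) \<Rightarrow> real \<Rightarrow> real \<Rightarrow> real" where
  "t_right u a x = u a + rderiv u a * (x - a)"

definition t_left :: "(real \<Rightarrow> real) \<Rightarrow> real \<Rightarrow> real \<Rightarrow> real" where
  "t_left u b x = u b + lderiv u b * (x - b)"

definition g_ab :: "(real \<Rightarrow> real) \<Rightarrow> real \<Rightarrow> real \<Rightarrow> real \<Rightarrow> real" where
  "g_ab u a b x = (if x \<in> {a..b} then u x - max (t_right u a x) (t_left u b x) else 0)"

definition vex :: "(real \<Rightarrow> real) \<Rightarrow> real \<Rightarrow> real" where
  "vex \<phi> x = (SUP g\<in>{g. convex_on X g \<and> (\<forall>y\<in>X. g y \<le> \<phi> y)}. g x)"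

definition h_ab :: "(real \<Rightarrow> real) \<Rightarrow> real \<Rightarrow> real \<Rightarrow> real \<Rightarrow> real" where
  "h_ab u a b x = vex (\<lambda>y. u y + g_ab u a b y) x - u x"

end

theory Submission
  imports Defs
begin

(*
  Let psi be the maximum of the one-sided tangents of u at a and b, so that g_ab = u - psi on [a,b]
  is a nonnegative gap vanishing at a and b, and u - g_ab is convex. The convex envelope V of
  u + g_ab lies between u and u + g_ab and agrees with u at 0 and 1. Hence u + eps h = (1 - eps) u
  + eps V is convex, and so is u - eps h = (1 - eps) u + eps (2u - V): if 2u - V rose above one of
  its chords l, then 2u - l, glued into V, would be a larger convex minorant of u + g_ab. Both
  perturbations lie above u - g_ab and agree with u at 0 and 1, which keeps their subgradients in S.

  If h = 0, i.e. V = u, then u is affine on the interval where u > psi: pushing u towards one of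
  its chords there would produce a larger convex minorant. So u = max psi l for a line l.
  Conversely, if u = max psi l, every convex minorant G of u + g_ab lies below l at the two points
  around x where l meets psi, hence G x <= l x = u x wherever u > psi. Finally, u is the maximum
  of psi and one line iff it is the maximum of three lines, since the tangents at a and b are
  themselves among the three.
*)

section \<open>Convex functions of a real variable\<close>

lemma convex_on_affine: "convex S \<Longrightarrow> convex_on S (\<lambda>x::real. m * x + k)"
  by (rule convex_onI) (auto simp: algebra_simps)

lemma convex_on_cong:
  assumes f: "convex_on A f" and eq: "\<And>x. x \<in> A \<Longrightarrow> f x = g x"
  shows "convex_on A g"
proof (rule convex_onI)
  fix t :: real and x y assume t: "0 < t" "t < 1" and xy: "x \<in> A" "y \<in> A"
  have "(1 - t) *\<^sub>R x + t *\<^sub>R y \<in> A"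
    using convexD[OF convex_on_imp_convex[OF f] xy, of "1 - t" t] t by simp
  then show "g ((1 - t) *\<^sub>R x + t *\<^sub>R y) \<le> (1 - t) * g x + t * g y"
    using convex_onD[OF f, of t x y] t xy eq by simp
qed (rule convex_on_imp_convex[OF f])

lemma convex_on_max:
  assumes f: "convex_on A f" and g: "convex_on A g"
  shows "convex_on A (\<lambda>x. max (f x) (g x))"
proof (rule convex_onI)
  fix t :: real and x y assume t: "0 < t" "t < 1" and xy: "x \<in> A" "y \<in> A"
  define z where "z = (1 - t) *\<^sub>R x + t *\<^sub>R y"
  define M where "M = (1 - t) * max (f x) (g x) + t * max (f y) (g y)"
  have "(1 - t) * f x + t * f y \<le> M" "(1 - t) * g x + t * g y \<le> M"
    unfolding M_def using t by (intro add_mono mult_left_mono; simp)+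
  moreover have "f z \<le> (1 - t) * f x + t * f y" "g z \<le> (1 - t) * g x + t * g y"
    unfolding z_def using t xy by (intro convex_onD[OF f] convex_onD[OF g]; simp)+
  ultimately show "max (f z) (g z) \<le> M"
    by (simp only: max.bounded_iff) linarith
qed (rule convex_on_imp_convex[OF f])

lemma convex_real_Icc_subset:
  fixes A :: "real set"
  assumes "convex A" "x \<in> A" "y \<in> A"
  shows "{x..y} \<subseteq> A"
  using mem_is_interval_1_I[OF is_interval_convex_1[THEN iffD2, OF assms(1)] assms(2,3)] by auto

lemma convex_on_le_affine:
  fixes f :: "real \<Rightarrow> real"
  assumes "convex_on {x..y} f" "f x \<le> m * x + k" "f y \<le> m * y + k" "t \<in> {x..y}"
  shows "f t \<le> m * t + k"
proof -
  have "convex_on {x..y} (\<lambda>s. f s + ((- m) * s + (- k)))"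
    using convex_on_add[OF assms(1) convex_on_affine[of "{x..y}" "- m" "- k"]] by simp
  from convex_on_le_max[OF this assms(4)] assms(2,3) show ?thesis by simp
qed

lemma convex_on_affine_majorantI:
  fixes f :: "real \<Rightarrow> real"
  assumes "convex A"
    and "\<And>x y m k t. x \<in> A \<Longrightarrow> y \<in> A \<Longrightarrow> x < y \<Longrightarrow> f x \<le> m * x + k \<Longrightarrow> f y \<le> m * y + k \<Longrightarrow>
           t \<in> {x..y} \<Longrightarrow> f t \<le> m * t + k"
  shows "convex_on A f"
proof (rule convex_on_linorderI[OF _ assms(1)])
  fix t x y :: real assume t: "0 < t" "t < 1" and xy: "x \<in> A" "y \<in> A" "x < y"
  define m where "m = (f y - f x) / (y - x)"
  define k where "k = f x - m * x"
  have slope: "m * (y - x) = f y - f x"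
    using xy by (simp add: m_def)
  then have "f x \<le> m * x + k" "f y \<le> m * y + k"
    by (simp_all add: k_def algebra_simps)
  moreover have "(1 - t) *\<^sub>R x + t *\<^sub>R y \<in> {x..y}"
  proof -
    have "0 \<le> t * (y - x)" "0 \<le> (1 - t) * (y - x)"
      using t xy by simp_all
    then show ?thesis by (simp add: algebra_simps)
  qed
  ultimately have "f ((1 - t) *\<^sub>R x + t *\<^sub>R y) \<le> m * ((1 - t) *\<^sub>R x + t *\<^sub>R y) + k"
    by (rule assms(2)[OF xy])
  also have "\<dots> = f x + t * (m * (y - x))"
    by (simp add: k_def algebra_simps)
  also have "\<dots> = (1 - t) * f x + t * f y"
    by (simp only: slope) (simp add: algebra_simps)
  finally show "f ((1 - t) *\<^sub>R x + t *\<^sub>R y) \<le> (1 - t) * f x + t * f y" .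
qed

lemma convex_on_glue_max:
  fixes V F :: "real \<Rightarrow> real"
  assumes A: "convex A" and V: "convex_on A V" and F: "convex_on {c..d} F"
    and Fc: "\<And>x. x \<in> A \<Longrightarrow> x < c \<Longrightarrow> F c \<le> V c"
    and Fd: "\<And>y. y \<in> A \<Longrightarrow> d < y \<Longrightarrow> F d \<le> V d"
  shows "convex_on A (\<lambda>s. if s \<in> {c..d} then max (V s) (F s) else V s)"
    (is "convex_on A ?G")
proof (rule convex_on_affine_majorantI[OF A])
  fix x y m k t
  assume xy: "x \<in> A" "y \<in> A" "x < y" and Gx: "?G x \<le> m * x + k" and Gy: "?G y \<le> m * y + k"
    and t: "t \<in> {x..y}"
  have V_le: "V s \<le> m * s + k" if "s \<in> {x..y}" for s
  proof (rule convex_on_le_affine[OF _ _ _ that])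
    show "convex_on {x..y} V"
      using convex_on_subset[OF V convex_real_Icc_subset[OF A xy(1,2)]] by simp
  qed (use Gx Gy in \<open>auto split: if_splits\<close>)
  show "?G t \<le> m * t + k"
  proof (cases "t \<in> {c..d}")
    case True
    define x' y' where "x' = max x c" and "y' = min y d"
    have Fx': "F x' \<le> m * x' + k"
    proof (cases "c \<le> x")
      case True
      then show ?thesis using Gx t \<open>t \<in> {c..d}\<close> by (auto simp: x'_def split: if_splits)
    next
      case False
      then show ?thesis using Fc[OF xy(1)] V_le[of c] t \<open>t \<in> {c..d}\<close> by (auto simp: x'_def)
    qed
    have Fy': "F y' \<le> m * y' + k"
    proof (cases "y \<le> d")
      case True
      then show ?thesis using Gy t \<open>t \<in> {c..d}\<close> by (auto simp: y'_def split: if_splits)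
    next
      case False
      then show ?thesis using Fd[OF xy(2)] V_le[of d] t \<open>t \<in> {c..d}\<close> by (auto simp: y'_def)
    qed
    have "convex_on {x'..y'} F"
      by (rule convex_on_subset[OF F]) (auto simp: x'_def y'_def)
    moreover have "t \<in> {x'..y'}"
      using t True by (auto simp: x'_def y'_def)
    ultimately have "F t \<le> m * t + k"
      using Fx' Fy' convex_on_le_affine by blast
    then show ?thesis using True V_le[OF t] by simp
  next
    case False
    then show ?thesis using V_le[OF t] by auto
  qed
qed

lemma convex_on_slope_mono:
  fixes f :: "real \<Rightarrow> real"
  assumes "convex_on A f" "x \<in> A" "z \<in> A" "x < y" "y < z"
  shows "(f y - f x) / (y - x) \<le> (f z - f x) / (z - x)"
    and "(f z - f x) / (z - x) \<le> (f z - f y) / (z - y)"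
proof -
  have swap: "(c - d) / (e - g) = (d - c) / (g - e)" for c d e g :: real
    by (metis minus_diff_eq minus_divide_divide)
  from convex_on_slope_le[OF assms]
  show "(f y - f x) / (y - x) \<le> (f z - f x) / (z - x)"
    and "(f z - f x) / (z - x) \<le> (f z - f y) / (z - y)"
    unfolding swap[of "f x"] swap[of "f y" "f z"] .
qed

lemma convex_on_ge_secant_outside:
  fixes u :: "real \<Rightarrow> real"
  assumes u: "convex_on A u" and pts: "y0 \<in> A" "y1 \<in> A" "t \<in> A" "y0 < y1"
    and on_line: "u y0 = m * y0 + k" "u y1 = m * y1 + k" and t: "t \<le> y0 \<or> y1 \<le> t"
  shows "m * t + k \<le> u t"
proof -
  have m: "m = (u y1 - u y0) / (y1 - y0)"
    using on_line pts by (simp add: field_simps)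
  consider "t < y0" | "t = y0" | "t = y1" | "y1 < t" using t by linarith
  then show ?thesis
  proof cases
    case 1
    then have "(u y0 - u t) / (y0 - t) \<le> m"
      using convex_on_slope_mono[OF u pts(3,2) 1 pts(4)] m by linarith
    then show ?thesis using 1 on_line by (simp add: pos_divide_le_eq algebra_simps)
  next
    case 4
    then have "m \<le> (u t - u y1) / (t - y1)"
      using convex_on_slope_mono[OF u pts(1,3) pts(4) 4] m by linarith
    then show ?thesis using 4 on_line by (simp add: pos_le_divide_eq algebra_simps)
  qed (use on_line in auto)
qed

lemma convex_on_eq_affine_if_ends:
  fixes u :: "real \<Rightarrow> real"
  assumes u: "convex_on {a..b} u" and ends: "u a = m * a + k" "u b = m * b + k"
    and above: "\<forall>x\<in>{a..b}. m * x + k \<le> u x" and x: "x \<in> {a..b}"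
  shows "u x = m * x + k"
proof (rule antisym)
  show "u x \<le> m * x + k"
    using convex_on_le_affine[OF u _ _ x] ends by simp
  show "m * x + k \<le> u x"
    using above x by blast
qed

lemma affine_on_interval_if_affine_on_subintervals:
  fixes u :: "real \<Rightarrow> real"
  assumes J: "is_interval J" and y: "y0 \<in> J" "y1 \<in> J" "y0 < y1"
    and affine: "\<And>x z. x \<in> J \<Longrightarrow> z \<in> J \<Longrightarrow> x < z \<Longrightarrow> \<exists>m k. \<forall>s\<in>{x..z}. u s = m * s + k"
  shows "\<exists>m k. \<forall>t\<in>J. u t = m * t + k"
proof -
  obtain m k where mk: "\<forall>s\<in>{y0..y1}. u s = m * s + k"
    using affine[OF y] by blast
  have "u t = m * t + k" if t: "t \<in> J" for t
  proof -
    define p q where "p = min y0 t" and "q = max y1 t"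
    have "p \<in> J" "q \<in> J" "p < q"
      using y t by (auto simp: p_def q_def min_def max_def)
    then obtain m' k' where mk': "\<forall>s\<in>{p..q}. u s = m' * s + k'"
      using affine by blast
    have "y0 \<in> {p..q}" "y1 \<in> {p..q}" "t \<in> {p..q}" "y0 \<in> {y0..y1}" "y1 \<in> {y0..y1}"
      using y(3) by (auto simp: p_def q_def)
    then have eq0: "m' * y0 + k' = m * y0 + k" and eq1: "m' * y1 + k' = m * y1 + k"
      and ut: "u t = m' * t + k'"
      using mk mk' by auto
    from eq0 eq1 have "(m' - m) * (y1 - y0) = 0"
      by (simp add: algebra_simps)
    with y(3) have "m' = m" by simp
    with eq0 have "k' = k" by simp
    with ut \<open>m' = m\<close> show ?thesis by simp
  qed
  then show ?thesis by blast
qed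

lemma exists_pos_right_of_pos:
  fixes f :: "real \<Rightarrow> real"
  assumes f: "continuous_on {a..b} f" and y: "y \<in> {a..b}" "y < b" "0 < f y"
  shows "\<exists>y'. y < y' \<and> y' \<le> b \<and> 0 < f y'"
proof -
  obtain d where d: "0 < d" "\<forall>y'\<in>{a..b}. dist y' y < d \<longrightarrow> dist (f y') (f y) < f y"
    using f y unfolding continuous_on_iff by blast
  define y' where "y' = y + min (d / 2) (b - y)"
  have y': "y < y'" "y' \<le> b" "y' \<in> {a..b}" "dist y' y < d"
    using d(1) y by (auto simp: y'_def dist_real_def)
  then have "dist (f y') (f y) < f y"
    using d(2) by blast
  then have "0 < f y'"
    by (auto simp: dist_real_def abs_less_iff)
  with y' show ?thesis by blast
qed

section \<open>One-sided derivatives\<close>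

lemma convex_on_right_slopes_tendsto_Inf:
  fixes u :: "real \<Rightarrow> real"
  assumes u: "convex_on {p..q} u" and a: "p \<le> a" "a < q"
    and bdd: "bdd_below ((\<lambda>t. (u t - u a) / (t - a)) ` {a<..q})"
  shows "((\<lambda>t. (u t - u a) / (t - a)) \<longlongrightarrow> Inf ((\<lambda>t. (u t - u a) / (t - a)) ` {a<..q})) (at_right a)"
proof -
  define S where "S = (\<lambda>t. (u t - u a) / (t - a)) ` {a<..q}"
  have S_ne: "S \<noteq> {}" using a by (auto simp: S_def)
  have Inf_le: "Inf S \<le> (u t - u a) / (t - a)" if "t \<in> {a<..q}" for t
    unfolding S_def using bdd that by (intro cInf_lower) auto
  have "((\<lambda>t. (u t - u a) / (t - a)) \<longlongrightarrow> Inf S) (at_right a)"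
  proof (rule order_tendstoI)
    fix y assume "y < Inf S"
    show "\<forall>\<^sub>F t in at_right a. y < (u t - u a) / (t - a)"
      using eventually_at_right_real[OF a(2)]
      by eventually_elim (use Inf_le \<open>y < Inf S\<close> in force)
  next
    fix y assume "Inf S < y"
    then obtain t0 where t0: "t0 \<in> {a<..q}" "(u t0 - u a) / (t0 - a) < y"
      using cInf_less_iff[OF S_ne bdd[folded S_def]] by (auto simp: S_def)
    have "\<forall>\<^sub>F t in at_right a. t \<in> {a<..<t0}"
      using t0(1) by (intro eventually_at_right_real) simp
    then show "\<forall>\<^sub>F t in at_right a. (u t - u a) / (t - a) < y"
    proof eventually_elim
      case (elim t)
      then have "(u t - u a) / (t - a) \<le> (u t0 - u a) / (t0 - a)"
        using a t0(1) by (intro convex_on_slope_mono(1)[OF u]) auto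
      then show ?case using t0 by simp
    qed
  qed
  then show ?thesis by (simp add: S_def)
qed

lemma rderiv_convex_on:
  fixes u :: "real \<Rightarrow> real"
  assumes u: "convex_on {p..q} u" and a: "p \<le> a" "a < q"
    and bdd: "bdd_below ((\<lambda>t. (u t - u a) / (t - a)) ` {a<..q})"
  shows "((\<lambda>t. (u t - u a) / (t - a)) \<longlongrightarrow> rderiv u a) (at_right a)"
    and "\<And>x. x \<in> {p..q} \<Longrightarrow> u a + rderiv u a * (x - a) \<le> u x"
proof -
  define S where "S = (\<lambda>t. (u t - u a) / (t - a)) ` {a<..q}"
  note tendsto = convex_on_right_slopes_tendsto_Inf[OF u a bdd, folded S_def]
  have rderiv: "rderiv u a = Inf S"
    unfolding rderiv_def using tendsto_Lim[OF trivial_limit_at_right_real tendsto] .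
  with tendsto show "((\<lambda>t. (u t - u a) / (t - a)) \<longlongrightarrow> rderiv u a) (at_right a)"
    by simp
  fix x assume x: "x \<in> {p..q}"
  consider "x < a" | "x = a" | "a < x" by linarith
  then show "u a + rderiv u a * (x - a) \<le> u x"
  proof cases
    case 1
    have "(u a - u x) / (a - x) \<le> Inf S"
      unfolding S_def
    proof (rule cInf_greatest, use a in force, clarify)
      fix t assume t: "t \<in> {a<..q}"
      have "x \<in> {p..q}" "t \<in> {p..q}" "x < a" "a < t"
        using x t a 1 by auto
      from convex_on_slope_mono[OF u this]
      show "(u a - u x) / (a - x) \<le> (u t - u a) / (t - a)"
        by (rule order_trans)
    qed
    then have "u a - u x \<le> Inf S * (a - x)"
      using 1 by (simp add: pos_divide_le_eq)
    then show ?thesis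
      unfolding rderiv by (simp add: right_diff_distrib)
  next
    case 3
    have "Inf S \<le> (u x - u a) / (x - a)"
      unfolding S_def using bdd x 3 by (intro cInf_lower) auto
    then have "Inf S * (x - a) \<le> u x - u a"
      using 3 by (simp add: pos_le_divide_eq)
    then show ?thesis
      unfolding rderiv by simp
  qed simp
qed

lemma lderiv_convex_on:
  fixes u :: "real \<Rightarrow> real"
  assumes u: "convex_on {p..q} u" and b: "p < b" "b \<le> q"
    and bdd: "bdd_above ((\<lambda>t. (u t - u b) / (t - b)) ` {p..<b})"
  shows "((\<lambda>t. (u t - u b) / (t - b)) \<longlongrightarrow> lderiv u b) (at_left b)"
    and "\<And>x. x \<in> {p..q} \<Longrightarrow> u b + lderiv u b * (x - b) \<le> u x"
proof -
  define v where "v x = u (- x)" for x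
  have v: "convex_on {-q..-p} v"
  proof (rule convex_onI)
    fix t :: real and x y assume "0 < t" "t < 1" "x \<in> {-q..-p}" "y \<in> {-q..-p}"
    then show "v ((1 - t) *\<^sub>R x + t *\<^sub>R y) \<le> (1 - t) * v x + t * v y"
      using convex_onD[OF u, of t "- x" "- y"] by (simp add: v_def algebra_simps)
  qed simp
  have quot: "(v t - v (- b)) / (t - - b) = - ((u (- t) - u b) / (- t - b))" for t
  proof -
    have "- t - b = - (t - - b)" by simp
    then show ?thesis by (simp only: v_def divide_minus_right) simp
  qed
  obtain M where M: "\<forall>s\<in>{p..<b}. (u s - u b) / (s - b) \<le> M"
    using bdd by (auto simp: bdd_above_def)
  have "bdd_below ((\<lambda>t. (v t - v (- b)) / (t - - b)) ` {- b<..- p})"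
  proof (rule bdd_belowI2)
    fix t :: real assume "t \<in> {- b<..- p}"
    then show "- M \<le> (v t - v (- b)) / (t - - b)"
      using bspec[OF M, of "- t"] by (simp only: quot) auto
  qed
  note R = rderiv_convex_on[OF v _ _ this]
  have tendsto: "((\<lambda>t. (u t - u b) / (t - b)) \<longlongrightarrow> - rderiv v (- b)) (at_left b)"
    unfolding at_left_minus filterlim_filtermap
    using tendsto_minus[OF R(1)] b by (simp only: quot minus_minus)
  have lderiv: "lderiv u b = - rderiv v (- b)"
    unfolding lderiv_def using tendsto_Lim[OF trivial_limit_at_left_real tendsto] .
  with tendsto show "((\<lambda>t. (u t - u b) / (t - b)) \<longlongrightarrow> lderiv u b) (at_left b)"
    by simp
  fix x assume "x \<in> {p..q}"
  then have "v (- b) + rderiv v (- b) * (- x - - b) \<le> v (- x)"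
    using b by (intro R(2)) auto
  then show "u b + lderiv u b * (x - b) \<le> u x"
    by (simp add: v_def lderiv algebra_simps)
qed

lemma rderiv_eq_if_eventually_line:
  assumes "u a = m * a + k" "\<forall>\<^sub>F x in at_right a. u x = m * x + k"
  shows "rderiv u a = m"
proof -
  have "\<forall>\<^sub>F x in at_right a. (u x - u a) / (x - a) = m"
    using assms(2) eventually_at_right_less[of a]
    by eventually_elim (use assms(1) in \<open>simp add: field_simps\<close>)
  then show ?thesis
    unfolding rderiv_def by (rule tendsto_Lim[OF trivial_limit_at_right_real tendsto_eventually])
qed

lemma lderiv_eq_if_eventually_line:
  assumes "u b = m * b + k" "\<forall>\<^sub>F x in at_left b. u x = m * x + k"
  shows "lderiv u b = m"
proof -
  have "\<forall>\<^sub>F x in at_left b. x \<in> {b - 1<..<b}"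
    by (rule eventually_at_left_real) simp
  with assms(2) have "\<forall>\<^sub>F x in at_left b. (u x - u b) / (x - b) = m"
    by eventually_elim (use assms(1) in \<open>simp add: field_simps\<close>)
  then show ?thesis
    unfolding lderiv_def by (rule tendsto_Lim[OF trivial_limit_at_left_real tendsto_eventually])
qed

lemma eventually_active_line_at_right:
  fixes u :: "real \<Rightarrow> real" and m k :: "'i \<Rightarrow> real"
  assumes I: "finite I" and ab: "a < b"
    and max: "\<And>x. x \<in> {a..b} \<Longrightarrow> (\<forall>i\<in>I. m i * x + k i \<le> u x) \<and> (\<exists>i\<in>I. m i * x + k i = u x)"
  shows "\<exists>i\<in>I. u a = m i * a + k i \<and> (\<forall>\<^sub>F x in at_right a. u x = m i * x + k i)"
proof -
  define A where "A = {i\<in>I. m i * a + k i = u a}"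
  have A: "finite A" "A \<noteq> {}"
    using I max[of a] ab by (auto simp: A_def)
  \<comment> \<open>Among the lines active at a, the steepest one dominates just to the right of a.\<close>
  have "Max (m ` A) \<in> m ` A"
    using A by (intro Max_in) auto
  then obtain i where i: "i \<in> A" "m i = Max (m ` A)"
    by (metis imageE)
  have steepest: "m j \<le> m i" if "j \<in> A" for j
    using Max_ge[of "m ` A" "m j"] A that i(2) by simp
  have "\<forall>\<^sub>F x in at_right a. m j * x + k j \<le> m i * x + k i" if j: "j \<in> I" for j
  proof (cases "j \<in> A")
    case True
    show ?thesis
      using eventually_at_right_less[of a]
    proof eventually_elim
      case (elim x)
      then have "m j * (x - a) \<le> m i * (x - a)"
        using steepest[OF True] by (intro mult_right_mono) auto
      then show ?case
        using True i(1) by (simp add: A_def algebra_simps)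
    qed
  next
    case False
    then have pos: "0 < (m i * a + k i) - (m j * a + k j)"
      using max[of a] ab i(1) j by (force simp: A_def)
    have "((\<lambda>x. (m i * x + k i) - (m j * x + k j)) \<longlongrightarrow> (m i * a + k i) - (m j * a + k j)) (at_right a)"
      by (intro tendsto_intros)
    from order_tendstoD(1)[OF this pos] show ?thesis
      by eventually_elim simp
  qed
  then have "\<forall>\<^sub>F x in at_right a. \<forall>j\<in>I. m j * x + k j \<le> m i * x + k i"
    by (rule eventually_ball_finite[OF I, rule_format])
  then have "\<forall>\<^sub>F x in at_right a. u x = m i * x + k i"
    using eventually_at_right_real[OF ab]
  proof eventually_elim
    case (elim x)
    then obtain j where "j \<in> I" "m j * x + k j = u x" "m i * x + k i \<le> u x"
      using max[of x] i(1) by (auto simp: A_def)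
    then show ?case using elim(1) by fastforce
  qed
  moreover have "i \<in> I" "u a = m i * a + k i"
    using i(1) by (auto simp: A_def)
  ultimately show ?thesis by blast
qed

lemma eventually_active_line_at_left:
  fixes u :: "real \<Rightarrow> real" and m k :: "'i \<Rightarrow> real"
  assumes I: "finite I" and ab: "a < b"
    and max: "\<And>x. x \<in> {a..b} \<Longrightarrow> (\<forall>i\<in>I. m i * x + k i \<le> u x) \<and> (\<exists>i\<in>I. m i * x + k i = u x)"
  shows "\<exists>i\<in>I. u b = m i * b + k i \<and> (\<forall>\<^sub>F x in at_left b. u x = m i * x + k i)"
proof -
  have "\<exists>i\<in>I. u (- (- b)) = - m i * - b + k i \<and> (\<forall>\<^sub>F x in at_right (- b). u (- x) = - m i * x + k i)"
  proof (rule eventually_active_line_at_right[OF I])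
    fix x assume "x \<in> {- b..- a}"
    then show "(\<forall>i\<in>I. - m i * x + k i \<le> u (- x)) \<and> (\<exists>i\<in>I. - m i * x + k i = u (- x))"
      using max[of "- x"] by auto
  qed (use ab in simp)
  then show ?thesis
    unfolding at_left_minus eventually_filtermap by simp
qed

lemma t_right_eq_active_line:
  fixes u :: "real \<Rightarrow> real" and m k :: "'i \<Rightarrow> real"
  assumes "finite I" "a < b"
    and "\<And>x. x \<in> {a..b} \<Longrightarrow> (\<forall>i\<in>I. m i * x + k i \<le> u x) \<and> (\<exists>i\<in>I. m i * x + k i = u x)"
  shows "\<exists>i\<in>I. \<forall>x. t_right u a x = m i * x + k i"
proof -
  obtain i where i: "i \<in> I" "u a = m i * a + k i" "\<forall>\<^sub>F x in at_right a. u x = m i * x + k i"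
    using eventually_active_line_at_right[OF assms] by blast
  then have "t_right u a x = m i * x + k i" for x
    using rderiv_eq_if_eventually_line[OF i(2,3)] by (simp add: t_right_def algebra_simps)
  with i(1) show ?thesis by blast
qed

lemma t_left_eq_active_line:
  fixes u :: "real \<Rightarrow> real" and m k :: "'i \<Rightarrow> real"
  assumes "finite I" "a < b"
    and "\<And>x. x \<in> {a..b} \<Longrightarrow> (\<forall>i\<in>I. m i * x + k i \<le> u x) \<and> (\<exists>i\<in>I. m i * x + k i = u x)"
  shows "\<exists>i\<in>I. \<forall>x. t_left u b x = m i * x + k i"
proof -
  obtain i where i: "i \<in> I" "u b = m i * b + k i" "\<forall>\<^sub>F x in at_left b. u x = m i * x + k i"
    using eventually_active_line_at_left[OF assms] by blast
  then have "t_left u b x = m i * x + k i" for x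
    using lderiv_eq_if_eventually_line[OF i(2,3)] by (simp add: t_left_def algebra_simps)
  with i(1) show ?thesis by blast
qed

section \<open>Slope bounds through the endpoints of X\<close>

definition above_endpoint_lines :: "(real \<Rightarrow> real) \<Rightarrow> real \<Rightarrow> real \<Rightarrow> bool" where
  "above_endpoint_lines f s1 s2 \<longleftrightarrow> (\<forall>y\<in>X. f 0 + s1 * y \<le> f y \<and> f 1 - s2 * (1 - y) \<le> f y)"

lemma above_endpoint_lines_mono:
  assumes "above_endpoint_lines f s1 s2" "\<forall>y\<in>X. f y \<le> f' y" "f' 0 = f 0" "f' 1 = f 1"
  shows "above_endpoint_lines f' s1 s2"
  using assms unfolding above_endpoint_lines_def by force

lemma subdiff_X_subset_if_above_endpoint_lines:
  assumes "above_endpoint_lines f s1 s2"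
  shows "subdiff_X f \<subseteq> {s1..s2}"
proof
  fix s assume "s \<in> subdiff_X f"
  then obtain z where z: "z \<in> {0<..<1}" and s: "\<forall>y\<in>X. f z + s * (y - z) \<le> f y"
    by (auto simp: subdiff_X_def subdiff_def)
  have "f z + s * (0 - z) \<le> f 0" "f 0 + s1 * z \<le> f z"
    using bspec[OF s, of 0] assms z by (auto simp: above_endpoint_lines_def)
  then have "s1 * z \<le> s * z" by (simp add: algebra_simps)
  moreover have "f z + s * (1 - z) \<le> f 1" "f 1 - s2 * (1 - z) \<le> f z"
    using bspec[OF s, of 1] assms z by (auto simp: above_endpoint_lines_def)
  then have "s * (1 - z) \<le> s2 * (1 - z)" by (simp add: algebra_simps)
  ultimately show "s \<in> {s1..s2}" using z by simp
qed

lemma rderiv_in_subdiff: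
  assumes u: "convex_on X u" and z: "z \<in> {0<..<1}"
  shows "rderiv u z \<in> subdiff u z"
proof -
  have "bdd_below ((\<lambda>t. (u t - u z) / (t - z)) ` {z<..1})"
  proof (rule bdd_belowI2)
    fix t assume "t \<in> {z<..1}"
    with z convex_on_slope_mono[OF u, of 0 t z] show "(u z - u 0) / (z - 0) \<le> (u t - u z) / (t - z)"
      by auto
  qed
  from rderiv_convex_on(2)[OF u _ _ this] z show ?thesis
    by (auto simp: subdiff_def)
qed

lemma rderiv_in_slopes:
  assumes u: "convex_on X u" and S: "subdiff_X u \<subseteq> {s1..s2}" and z: "z \<in> {0<..<1}"
  shows "rderiv u z \<in> {s1..s2}" and "\<And>x. x \<in> X \<Longrightarrow> u z + rderiv u z * (x - z) \<le> u x"
proof -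
  have sub: "rderiv u z \<in> subdiff u z"
    using rderiv_in_subdiff[OF u z] .
  then show "u z + rderiv u z * (x - z) \<le> u x" if "x \<in> X" for x
    using that unfolding subdiff_def by blast
  from sub z have "rderiv u z \<in> subdiff_X u"
    unfolding subdiff_X_def by blast
  then show "rderiv u z \<in> {s1..s2}"
    using S by blast
qed

lemma above_endpoint_lines_if_subdiff_X_subset:
  assumes u: "cvx u" and S: "subdiff_X u \<subseteq> {s1..s2}"
  shows "above_endpoint_lines u s1 s2"
  unfolding above_endpoint_lines_def
proof (intro ballI conjI)
  fix y assume y: "y \<in> X"
  have conv: "convex_on X u" and cont: "continuous_on X u"
    using u by (auto simp: cvx_def)
  note slope = rderiv_in_slopes[OF conv S]
  have "(u \<longlongrightarrow> u x) (at x within X)" if "x \<in> X" for x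
    using cont that by (simp add: continuous_on_def)
  from this[of 0] this[of 1]
  have lim0: "(u \<longlongrightarrow> u 0) (at_right 0)" and lim1: "(u \<longlongrightarrow> u 1) (at_left 1)"
    by (simp_all add: at_within_Icc_at_right at_within_Icc_at_left)
  \<comment> \<open>Subgradients at interior points z give the bounds with z in place of 0 and 1; let z tend to the endpoint.\<close>
  show "u 0 + s1 * y \<le> u y"
  proof (cases "y = 0")
    case False
    then have "\<forall>\<^sub>F z in at_right 0. z \<in> {0<..<y}"
      using y by (intro eventually_at_right_real) simp
    then have "\<forall>\<^sub>F z in at_right 0. u z + s1 * (y - z) \<le> u y"
    proof eventually_elim
      case (elim z)
      then have "s1 * (y - z) \<le> rderiv u z * (y - z)" "u z + rderiv u z * (y - z) \<le> u y"
        using y slope[of z] by (auto intro: mult_right_mono)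
      then show ?case by simp
    qed
    moreover have "((\<lambda>z. u z + s1 * (y - z)) \<longlongrightarrow> u 0 + s1 * (y - 0)) (at_right 0)"
      by (intro tendsto_intros lim0)
    ultimately show ?thesis
      using tendsto_upperbound[of _ "u 0 + s1 * (y - 0)"] by fastforce
  qed simp
  show "u 1 - s2 * (1 - y) \<le> u y"
  proof (cases "y = 1")
    case False
    then have "\<forall>\<^sub>F z in at_left 1. z \<in> {y<..<1}"
      using y by (intro eventually_at_left_real) simp
    then have "\<forall>\<^sub>F z in at_left 1. u z - s2 * (z - y) \<le> u y"
    proof eventually_elim
      case (elim z)
      then have "rderiv u z * (z - y) \<le> s2 * (z - y)" "u z + rderiv u z * (y - z) \<le> u y"
        using y slope[of z] by (auto intro: mult_right_mono)
      then show ?case by (simp add: algebra_simps)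
    qed
    moreover have "((\<lambda>z. u z - s2 * (z - y)) \<longlongrightarrow> u 1 - s2 * (1 - y)) (at_left 1)"
      by (intro tendsto_intros lim1)
    ultimately show ?thesis
      using tendsto_upperbound[of _ "u 1 - s2 * (1 - y)"] by fastforce
  qed simp
qed

lemma slope_bounds_if_above_endpoint_lines:
  assumes u: "convex_on X u" and lines: "above_endpoint_lines u s1 s2"
  shows "\<And>a t. 0 \<le> a \<Longrightarrow> a < t \<Longrightarrow> t \<le> 1 \<Longrightarrow> s1 \<le> (u t - u a) / (t - a)"
    and "\<And>b t. 0 \<le> t \<Longrightarrow> t < b \<Longrightarrow> b \<le> 1 \<Longrightarrow> (u t - u b) / (t - b) \<le> s2"
proof -
  fix a t :: real assume at: "0 \<le> a" "a < t" "t \<le> 1"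
  have "t \<in> X" using at by simp
  then have "u 0 + s1 * t \<le> u t"
    using lines unfolding above_endpoint_lines_def by blast
  then have "s1 \<le> (u t - u 0) / (t - 0)"
    using at by (simp add: pos_le_divide_eq algebra_simps)
  also have "\<dots> \<le> (u t - u a) / (t - a)"
    using convex_on_slope_mono(2)[OF u, of 0 t a] at by (cases "a = 0") auto
  finally show "s1 \<le> (u t - u a) / (t - a)" .
next
  fix b t :: real assume bt: "0 \<le> t" "t < b" "b \<le> 1"
  have "t \<in> X" using bt by simp
  then have "u 1 - s2 * (1 - t) \<le> u t"
    using lines unfolding above_endpoint_lines_def by blast
  then have end_slope: "(u 1 - u t) / (1 - t) \<le> s2"
    using bt by (simp add: pos_divide_le_eq algebra_simps)
  have "(u t - u b) / (t - b) = (u b - u t) / (b - t)"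
    by (metis minus_diff_eq minus_divide_divide)
  also have "\<dots> \<le> (u 1 - u t) / (1 - t)"
    using convex_on_slope_mono(1)[OF u, of t 1 b] bt by (cases "b = 1") auto
  finally show "(u t - u b) / (t - b) \<le> s2"
    using end_slope by simp
qed

lemma rderiv_bound_and_t_right_le:
  assumes u: "convex_on X u" and lines: "above_endpoint_lines u s1 s2" and a: "0 \<le> a" "a < 1"
  shows "s1 \<le> rderiv u a" and "\<And>x. x \<in> X \<Longrightarrow> t_right u a x \<le> u x"
proof -
  have bdd: "bdd_below ((\<lambda>t. (u t - u a) / (t - a)) ` {a<..1})"
    using slope_bounds_if_above_endpoint_lines(1)[OF u lines a(1)] by (intro bdd_belowI2) auto
  note R = rderiv_convex_on[OF u a bdd]
  have "\<forall>\<^sub>F t in at_right a. t \<in> {a<..<1}"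
    using a by (intro eventually_at_right_real) simp
  then have "\<forall>\<^sub>F t in at_right a. s1 \<le> (u t - u a) / (t - a)"
    by eventually_elim (use slope_bounds_if_above_endpoint_lines(1)[OF u lines a(1)] in auto)
  from tendsto_lowerbound[OF R(1) this trivial_limit_at_right_real]
  show "s1 \<le> rderiv u a" .
  show "t_right u a x \<le> u x" if "x \<in> X" for x
    using R(2)[OF that] by (simp add: t_right_def)
qed

lemma lderiv_bound_and_t_left_le:
  assumes u: "convex_on X u" and lines: "above_endpoint_lines u s1 s2" and b: "0 < b" "b \<le> 1"
  shows "lderiv u b \<le> s2" and "\<And>x. x \<in> X \<Longrightarrow> t_left u b x \<le> u x"
proof -
  have bdd: "bdd_above ((\<lambda>t. (u t - u b) / (t - b)) ` {0..<b})"
    using slope_bounds_if_above_endpoint_lines(2)[OF u lines _ _ b(2)] by (intro bdd_aboveI2) auto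
  note L = lderiv_convex_on[OF u b bdd]
  have "\<forall>\<^sub>F t in at_left b. t \<in> {0<..<b}"
    using b by (intro eventually_at_left_real) simp
  then have "\<forall>\<^sub>F t in at_left b. (u t - u b) / (t - b) \<le> s2"
    by eventually_elim (use slope_bounds_if_above_endpoint_lines(2)[OF u lines _ _ b(2)] in auto)
  from tendsto_upperbound[OF L(1) this trivial_limit_at_left_real]
  show "lderiv u b \<le> s2" .
  show "t_left u b x \<le> u x" if "x \<in> X" for x
    using L(2)[OF that] by (simp add: t_left_def)
qed

section \<open>Convex envelopes\<close>

definition convex_minorants :: "(real \<Rightarrow> real) \<Rightarrow> (real \<Rightarrow> real) set" where
  "convex_minorants \<phi> = {g. convex_on X g \<and> (\<forall>y\<in>X. g y \<le> \<phi> y)}"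

lemma vex_eq_SUP: "vex \<phi> x = (SUP g\<in>convex_minorants \<phi>. g x)"
  by (simp add: vex_def convex_minorants_def)

lemma vex_ge:
  assumes "g \<in> convex_minorants \<phi>" "x \<in> X"
  shows "g x \<le> vex \<phi> x"
  unfolding vex_eq_SUP
proof (rule cSUP_upper[OF assms(1)])
  show "bdd_above ((\<lambda>g. g x) ` convex_minorants \<phi>)"
    using assms(2) by (intro bdd_aboveI2[where M = "\<phi> x"]) (auto simp: convex_minorants_def)
qed

lemma vex_le:
  assumes "convex_minorants \<phi> \<noteq> {}" "x \<in> X"
  shows "vex \<phi> x \<le> \<phi> x"
  unfolding vex_eq_SUP using assms by (intro cSUP_least) (auto simp: convex_minorants_def)

lemma convex_on_vex:
  assumes ne: "convex_minorants \<phi> \<noteq> {}"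
  shows "convex_on X (vex \<phi>)"
proof (rule convex_onI)
  fix t :: real and x y assume t: "0 < t" "t < 1" and xy: "x \<in> X" "y \<in> X"
  show "vex \<phi> ((1 - t) *\<^sub>R x + t *\<^sub>R y) \<le> (1 - t) * vex \<phi> x + t * vex \<phi> y"
    unfolding vex_eq_SUP[of \<phi> "(1 - t) *\<^sub>R x + t *\<^sub>R y"]
  proof (rule cSUP_least[OF ne])
    fix g assume g: "g \<in> convex_minorants \<phi>"
    have "g ((1 - t) *\<^sub>R x + t *\<^sub>R y) \<le> (1 - t) * g x + t * g y"
      using g t xy by (intro convex_onD) (auto simp: convex_minorants_def)
    also have "\<dots> \<le> (1 - t) * vex \<phi> x + t * vex \<phi> y"
      using vex_ge[OF g] xy t by (intro add_mono mult_left_mono) auto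
    finally show "g ((1 - t) *\<^sub>R x + t *\<^sub>R y) \<le> (1 - t) * vex \<phi> x + t * vex \<phi> y" .
  qed
qed (simp add: convex_real_interval)

lemma convex_on_Icc_le_vex:
  fixes \<phi> F :: "real \<Rightarrow> real"
  assumes ne: "convex_minorants \<phi> \<noteq> {}" and F: "convex_on {x..z} F" and sub: "{x..z} \<subseteq> X"
    and ends: "F x \<le> vex \<phi> x" "F z \<le> vex \<phi> z" and below: "\<forall>s\<in>{x..z}. F s \<le> \<phi> s"
    and s: "s \<in> {x..z}"
  shows "F s \<le> vex \<phi> s"
proof -
  define G where "G t = (if t \<in> {x..z} then max (vex \<phi> t) (F t) else vex \<phi> t)" for t
  have "convex_on X G"
    unfolding G_def using ends sub
    by (intro convex_on_glue_max convex_on_vex[OF ne] F) (auto simp: convex_real_interval)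
  moreover have "\<forall>t\<in>X. G t \<le> \<phi> t"
    using vex_le[OF ne] below by (auto simp: G_def)
  ultimately have "G s \<le> vex \<phi> s"
    using vex_ge[of G \<phi> s] s sub by (auto simp: convex_minorants_def)
  then show ?thesis using s by (simp add: G_def)
qed

lemma continuous_on_convex_above_continuous:
  assumes V: "convex_on X V" and u: "continuous_on X u" and le: "\<forall>t\<in>X. u t \<le> V t"
    and V0: "V 0 = u 0" and V1: "V 1 = u 1"
  shows "continuous_on X V"
  unfolding continuous_on_eq_continuous_within
proof
  fix x assume x: "x \<in> X"
  show "continuous (at x within X) V"
  proof (cases "x \<in> {0<..<1}")
    case True
    have "continuous_on {0<..<1} V"
      by (rule convex_on_continuous) (auto intro: convex_on_subset[OF V])
    with True have "isCont V x"
      by (simp add: continuous_on_eq_continuous_at)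
    then show ?thesis
      by (rule continuous_at_imp_continuous_within)
  next
    case False
    then have x01: "x = 0 \<or> x = 1" using x by auto
    \<comment> \<open>At the endpoints V is squeezed between u and the chord of V over X.\<close>
    define chord where "chord t = (1 - t) * V 0 + t * V 1" for t
    have lim_u: "(u \<longlongrightarrow> V x) (at x within X)"
      using u x x01 V0 V1 by (auto simp: continuous_on_def)
    have "(chord \<longlongrightarrow> chord x) (at x within X)"
      unfolding chord_def by (intro tendsto_intros)
    then have lim_chord: "(chord \<longlongrightarrow> V x) (at x within X)"
      using x01 by (auto simp: chord_def)
    have below: "\<forall>\<^sub>F t in at x within X. u t \<le> V t"
      unfolding eventually_at_filter by (rule always_eventually) (use le in auto)
    have "V t \<le> chord t" if "t \<in> X" for t
      using convex_onD[OF V, of t 0 1] that by (simp add: chord_def)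
    then have above: "\<forall>\<^sub>F t in at x within X. V t \<le> chord t"
      unfolding eventually_at_filter by (intro always_eventually) auto
    show ?thesis
      unfolding continuous_within using tendsto_sandwich[OF below above lim_u lim_chord] .
  qed
qed

lemma vex_plus_gap:
  assumes u: "cvx u" and g: "\<forall>x\<in>X. 0 \<le> g x" "g 0 = 0" "g 1 = 0"
  shows "\<forall>x\<in>X. u x \<le> vex (\<lambda>y. u y + g y) x \<and> vex (\<lambda>y. u y + g y) x \<le> u x + g x"
    and "vex (\<lambda>y. u y + g y) 0 = u 0" and "vex (\<lambda>y. u y + g y) 1 = u 1"
    and "cvx (vex (\<lambda>y. u y + g y))"
proof -
  have conv: "convex_on X u" and cont: "continuous_on X u"
    using u by (auto simp: cvx_def)
  have u_min: "u \<in> convex_minorants (\<lambda>y. u y + g y)"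
    using conv g by (simp add: convex_minorants_def)
  then have ne: "convex_minorants (\<lambda>y. u y + g y) \<noteq> {}" by auto
  show bounds: "\<forall>x\<in>X. u x \<le> vex (\<lambda>y. u y + g y) x \<and> vex (\<lambda>y. u y + g y) x \<le> u x + g x"
    using vex_ge[OF u_min] vex_le[OF ne] by simp
  show ends: "vex (\<lambda>y. u y + g y) 0 = u 0" "vex (\<lambda>y. u y + g y) 1 = u 1"
    using bspec[OF bounds, of 0] bspec[OF bounds, of 1] g(2,3) by auto
  have "convex_on X (vex (\<lambda>y. u y + g y))"
    by (rule convex_on_vex[OF ne])
  moreover from this have "continuous_on X (vex (\<lambda>y. u y + g y))"
    using continuous_on_convex_above_continuous[OF _ cont] bounds ends by blast
  ultimately show "cvx (vex (\<lambda>y. u y + g y))"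
    by (simp add: cvx_def)
qed

(* If 2u - vex (u + g) rose above a chord, then 2u minus that chord, glued into the envelope,
   would be a larger convex minorant of u + g. *)
lemma convex_on_twice_minus_vex:
  assumes u: "convex_on X u" and g: "\<forall>x\<in>X. 0 \<le> g x" and ug: "convex_on X (\<lambda>x. u x - g x)"
  shows "convex_on X (\<lambda>x. 2 * u x - vex (\<lambda>y. u y + g y) x)"
proof (rule convex_on_affine_majorantI)
  define \<phi> where "\<phi> = (\<lambda>y. u y + g y)"
  have "u \<in> convex_minorants \<phi>"
    using u g by (simp add: convex_minorants_def \<phi>_def)
  then have ne: "convex_minorants \<phi> \<noteq> {}" by auto
  fix x z m k t
  assume xz: "x \<in> X" "z \<in> X" "x < z" and t: "t \<in> {x..z}"
    and wx: "2 * u x - vex (\<lambda>y. u y + g y) x \<le> m * x + k"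
    and wz: "2 * u z - vex (\<lambda>y. u y + g y) z \<le> m * z + k"
  have sub: "{x..z} \<subseteq> X" using xz by auto
  define F where "F s = 2 * u s + (- m * s + - k)" for s
  have "convex_on {x..z} (\<lambda>s. 2 * u s)"
    using convex_on_subset[OF u sub] by (intro convex_on_cmul) (auto simp: convex_real_interval)
  then have F_conv: "convex_on {x..z} F"
    unfolding F_def by (rule convex_on_add[OF _ convex_on_affine]) (simp add: convex_real_interval)
  have Fx: "F x \<le> vex \<phi> x" and Fz: "F z \<le> vex \<phi> z"
    using wx wz by (simp_all add: F_def \<phi>_def)
  have F_le: "\<forall>s\<in>{x..z}. F s \<le> \<phi> s"
  proof
    fix s assume s: "s \<in> {x..z}"
    have "u s - g s \<le> m * s + k"
    proof (rule convex_on_le_affine[OF convex_on_subset[OF ug sub] _ _ s])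
      show "u x - g x \<le> m * x + k" "u z - g z \<le> m * z + k"
        using vex_le[OF ne, of x] vex_le[OF ne, of z] Fx Fz xz by (auto simp: F_def \<phi>_def)
    qed (simp add: convex_real_interval)
    then show "F s \<le> \<phi> s" by (simp add: F_def \<phi>_def)
  qed
  have "F t \<le> vex \<phi> t"
    by (rule convex_on_Icc_le_vex[OF ne F_conv sub Fx Fz F_le t])
  then show "2 * u t - vex (\<lambda>y. u y + g y) t \<le> m * t + k"
    by (simp add: F_def \<phi>_def)
qed (simp add: convex_real_interval)

lemma vex_perturbation_cvx_slopes:
  fixes u g :: "real \<Rightarrow> real" and \<epsilon> :: real
  assumes u: "cvx u" and g: "\<forall>x\<in>X. 0 \<le> g x" "g 0 = 0" "g 1 = 0"
    and ug: "convex_on X (\<lambda>x. u x - g x)" "above_endpoint_lines (\<lambda>x. u x - g x) s1 s2"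
    and \<epsilon>: "0 \<le> \<epsilon>" "\<epsilon> \<le> 1"
  defines "h \<equiv> \<lambda>x. vex (\<lambda>y. u y + g y) x - u x"
  shows "cvx (\<lambda>x. u x + \<epsilon> * h x)" and "subdiff_X (\<lambda>x. u x + \<epsilon> * h x) \<subseteq> {s1..s2}"
    and "cvx (\<lambda>x. u x - \<epsilon> * h x)" and "subdiff_X (\<lambda>x. u x - \<epsilon> * h x) \<subseteq> {s1..s2}"
proof -
  define V where "V = vex (\<lambda>y. u y + g y)"
  note V = vex_plus_gap[OF u g, folded V_def]
  have conv: "convex_on X u" and cont: "continuous_on X u"
    and V_conv: "convex_on X V" and V_cont: "continuous_on X V"
    using u V(4) by (auto simp: cvx_def)
  have W_conv: "convex_on X (\<lambda>x. 2 * u x - V x)"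
    unfolding V_def by (rule convex_on_twice_minus_vex[OF conv g(1) ug(1)])
  have h: "h x = V x - u x" for x
    by (simp add: h_def V_def)
  have combination: "convex_on X (\<lambda>x. (1 - \<epsilon>) * u x + \<epsilon> * f x)" if "convex_on X f" for f
    using \<epsilon> conv that by (intro convex_on_add convex_on_cmul) auto
  have plus: "(\<lambda>x. u x + \<epsilon> * h x) = (\<lambda>x. (1 - \<epsilon>) * u x + \<epsilon> * V x)"
    and minus: "(\<lambda>x. u x - \<epsilon> * h x) = (\<lambda>x. (1 - \<epsilon>) * u x + \<epsilon> * (2 * u x - V x))"
    by (auto simp: h algebra_simps)
  show "cvx (\<lambda>x. u x + \<epsilon> * h x)" "cvx (\<lambda>x. u x - \<epsilon> * h x)"
    unfolding cvx_def plus minus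
    using combination[OF V_conv] combination[OF W_conv] cont V_cont
    by (auto intro!: continuous_intros)
  have h_ge: "0 \<le> h x" and h_le: "h x \<le> g x" if "x \<in> X" for x
    using bspec[OF V(1) that] by (auto simp: h)
  have h_ends: "h 0 = 0" "h 1 = 0"
    using V(2,3) by (simp_all add: h)
  have "above_endpoint_lines (\<lambda>x. u x + \<epsilon> * h x) s1 s2"
  proof (rule above_endpoint_lines_mono[OF ug(2)])
    show "\<forall>y\<in>X. u y - g y \<le> u y + \<epsilon> * h y"
      using g(1) h_ge \<epsilon> by (smt (verit) mult_nonneg_nonneg)
  qed (simp_all add: h_ends g(2,3))
  then show "subdiff_X (\<lambda>x. u x + \<epsilon> * h x) \<subseteq> {s1..s2}"
    by (rule subdiff_X_subset_if_above_endpoint_lines)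
  have "above_endpoint_lines (\<lambda>x. u x - \<epsilon> * h x) s1 s2"
  proof (rule above_endpoint_lines_mono[OF ug(2)])
    show "\<forall>y\<in>X. u y - g y \<le> u y - \<epsilon> * h y"
      using h_ge h_le \<epsilon> by (smt (verit) mult_left_le_one_le)
  qed (simp_all add: h_ends g(2,3))
  then show "subdiff_X (\<lambda>x. u x - \<epsilon> * h x) \<subseteq> {s1..s2}"
    by (rule subdiff_X_subset_if_above_endpoint_lines)
qed

(* Pushing u slightly towards a chord gives a convex minorant of the obstacle; as u is the
   envelope, u already lies above the chord. *)
lemma chord_le_if_vex_eq:
  fixes u \<phi> :: "real \<Rightarrow> real"
  assumes u: "convex_on X u" and u_le: "\<forall>s\<in>X. u s \<le> \<phi> s" and vex: "\<forall>s\<in>X. vex \<phi> s = u s"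
    and sub: "{x..z} \<subseteq> X" and ends: "m * x + k = u x" "m * z + k = u z"
    and \<theta>: "0 < \<theta>" "\<theta> \<le> 1" and push: "\<forall>s\<in>{x..z}. u s + \<theta> * (m * s + k - u s) \<le> \<phi> s"
    and s: "s \<in> {x..z}"
  shows "m * s + k \<le> u s"
proof -
  define F where "F s = (1 - \<theta>) * u s + ((\<theta> * m) * s + \<theta> * k)" for s
  have F_eq: "F s = u s + \<theta> * (m * s + k - u s)" for s
    by (simp add: F_def algebra_simps)
  have F_conv: "convex_on {x..z} F"
    unfolding F_def using \<theta> convex_on_subset[OF u sub]
    by (intro convex_on_add convex_on_cmul convex_on_affine) (auto simp: convex_real_interval)
  have ne: "convex_minorants \<phi> \<noteq> {}"
    using u u_le by (auto simp: convex_minorants_def)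
  have "x \<in> X" "z \<in> X"
    using s sub by auto
  then have F_ends: "F x \<le> vex \<phi> x" "F z \<le> vex \<phi> z"
    using vex ends by (simp_all add: F_eq)
  have "\<forall>s\<in>{x..z}. F s \<le> \<phi> s"
    using push by (simp add: F_eq)
  from convex_on_Icc_le_vex[OF ne F_conv sub F_ends this s] have "F s \<le> u s"
    using vex s sub by auto
  then have "\<theta> * (m * s + k - u s) \<le> 0" by (simp add: F_eq)
  then show ?thesis using \<theta>(1) by (simp add: mult_le_0_iff)
qed

lemma affine_on_if_vex_eq:
  fixes u \<phi> :: "real \<Rightarrow> real"
  assumes u: "convex_on X u" "continuous_on X u" and u_le: "\<forall>s\<in>X. u s \<le> \<phi> s"
    and vex: "\<forall>s\<in>X. vex \<phi> s = u s"
    and xz: "x < z" "{x..z} \<subseteq> X" and \<delta>: "0 < \<delta>" "\<forall>s\<in>{x..z}. u s + \<delta> \<le> \<phi> s"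
  shows "\<exists>m k. \<forall>s\<in>{x..z}. u s = m * s + k"
proof -
  define c where "c = (u z - u x) / (z - x)"
  define C where "C s = c * s + (u x - c * x)" for s
  have "c * (z - x) = u z - u x"
    using xz(1) by (simp add: c_def)
  then have C_ends: "C x = u x" "C z = u z"
    by (simp_all add: C_def algebra_simps)
  have u_xz: "convex_on {x..z} u"
    using convex_on_subset[OF u(1) xz(2)] by (simp add: convex_real_interval)
  have u_le_C: "u s \<le> C s" if "s \<in> {x..z}" for s
    unfolding C_def by (rule convex_on_le_affine[OF u_xz _ _ that]) (use C_ends in \<open>simp_all add: C_def\<close>)
  have "continuous_on {x..z} (\<lambda>s. C s - u s)"
    unfolding C_def using continuous_on_subset[OF u(2) xz(2)] by (intro continuous_intros)
  moreover have "{x..z} \<noteq> {}"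
    using xz(1) by simp
  ultimately obtain s0 where s0: "\<forall>s\<in>{x..z}. C s - u s \<le> C s0 - u s0"
    using continuous_attains_sup[OF compact_Icc] by blast
  define B where "B = max (C s0 - u s0) 0"
  define \<theta> where "\<theta> = \<delta> / (\<delta> + B)"
  have B: "0 \<le> B" "\<forall>s\<in>{x..z}. C s - u s \<le> B"
    using s0 by (auto simp: B_def)
  have \<theta>: "0 < \<theta>" "\<theta> \<le> 1" "\<theta> * B \<le> \<delta>"
    using \<delta>(1) B(1) by (auto simp: \<theta>_def field_simps)
  have push: "\<forall>s\<in>{x..z}. u s + \<theta> * (c * s + (u x - c * x) - u s) \<le> \<phi> s"
  proof
    fix s assume s: "s \<in> {x..z}"
    have "\<theta> * (C s - u s) \<le> \<theta> * B"
      using B(2) s \<theta>(1) by (intro mult_left_mono) auto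
    moreover have "u s + \<delta> \<le> \<phi> s"
      using \<delta>(2) s by blast
    ultimately have "u s + \<theta> * (C s - u s) \<le> \<phi> s"
      using \<theta>(3) by linarith
    then show "u s + \<theta> * (c * s + (u x - c * x) - u s) \<le> \<phi> s"
      by (simp add: C_def)
  qed
  have "C s = u s" if s: "s \<in> {x..z}" for s
    using chord_le_if_vex_eq[OF u(1) u_le vex xz(2) C_ends[unfolded C_def] \<theta>(1,2) push s]
      u_le_C[OF s] by (simp add: C_def)
  then show ?thesis
    unfolding C_def by (intro exI[of _ c] exI[of _ "u x - c * x"]) simp
qed

(* Where the line meets psi, u equals both, so G lies below the line at two points around x. *)
lemma convex_minorant_le_if_max_line:
  fixes G u \<psi> :: "real \<Rightarrow> real"
  assumes G: "convex_on X G" and ab: "0 \<le> a" "a \<le> b" "b \<le> 1"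
    and G_le: "\<forall>x\<in>X. G x \<le> u x + (if x \<in> {a..b} then u x - \<psi> x else 0)"
    and u_eq: "\<forall>x\<in>{a..b}. u x = max (\<psi> x) (m * x + k)"
    and \<psi>: "continuous_on {a..b} \<psi>" "\<psi> a = u a" "\<psi> b = u b"
    and x: "x \<in> X"
  shows "G x \<le> u x"
proof (cases "x \<in> {a..b} \<and> \<psi> x < u x")
  case False
  then show ?thesis using bspec[OF G_le x] by (auto split: if_splits)
next
  case True
  define d where "d s = m * s + k - \<psi> s" for s
  have "u x = max (\<psi> x) (m * x + k)"
    using u_eq True by blast
  then have x_line: "u x = m * x + k" and dx: "0 < d x"
    using True by (auto simp: d_def max_def split: if_splits)
  have "u a = max (\<psi> a) (m * a + k)" "u b = max (\<psi> b) (m * b + k)"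
    using u_eq ab by auto
  then have d_ends: "d a \<le> 0" "d b \<le> 0"
    using \<psi>(2,3) by (auto simp: d_def)
  have d_cont: "continuous_on {a..b} d"
    unfolding d_def using \<psi>(1) by (intro continuous_intros)
  have G_le_line: "G s \<le> m * s + k" if "s \<in> {a..b}" "d s = 0" for s
  proof -
    have "s \<in> X" using that(1) ab by auto
    then have "G s \<le> u s + (u s - \<psi> s)"
      using bspec[OF G_le \<open>s \<in> X\<close>] that(1) by simp
    moreover have "u s = max (\<psi> s) (m * s + k)"
      using u_eq that(1) by blast
    ultimately show ?thesis using that(2) by (simp add: d_def)
  qed
  obtain p where p: "a \<le> p" "p \<le> x" "d p = 0"
    using IVT'[of d a 0 x] d_ends dx True continuous_on_subset[OF d_cont] by force
  obtain q where q: "x \<le> q" "q \<le> b" "d q = 0"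
    using IVT2'[of d b 0 x] d_ends dx True continuous_on_subset[OF d_cont] by force
  have "convex_on {p..q} G"
    using p q ab by (intro convex_on_subset[OF G]) auto
  moreover have "G p \<le> m * p + k" "G q \<le> m * q + k"
    using G_le_line p q True by auto
  moreover have "x \<in> {p..q}"
    using p q by simp
  ultimately have "G x \<le> m * x + k"
    by (rule convex_on_le_affine)
  then show ?thesis using x_line by simp
qed

lemma affine_on_contact_free_subinterval:
  fixes u \<psi> :: "real \<Rightarrow> real"
  assumes u: "convex_on X u" "continuous_on X u" and ab: "0 \<le> a" "b \<le> 1"
    and \<psi>: "continuous_on {a..b} \<psi>" "\<forall>x\<in>{a..b}. \<psi> x \<le> u x"
    and vex: "\<forall>x\<in>X. vex (\<lambda>y. u y + (if y \<in> {a..b} then u y - \<psi> y else 0)) x = u x"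
    and xz: "x < z" "{x..z} \<subseteq> {a..b}" "\<forall>s\<in>{x..z}. \<psi> s < u s"
  shows "\<exists>m k. \<forall>s\<in>{x..z}. u s = m * s + k"
proof -
  have sub: "{a..b} \<subseteq> X" using ab by auto
  have "continuous_on {x..z} (\<lambda>s. u s - \<psi> s)"
    using continuous_on_subset[OF u(2) order_trans[OF xz(2) sub]] continuous_on_subset[OF \<psi>(1) xz(2)]
    by (intro continuous_intros)
  moreover have "{x..z} \<noteq> {}"
    using xz(1) by simp
  ultimately obtain s0 where s0: "s0 \<in> {x..z}" "\<forall>s\<in>{x..z}. u s0 - \<psi> s0 \<le> u s - \<psi> s"
    using continuous_attains_inf[OF compact_Icc] by blast
  have \<delta>: "0 < u s0 - \<psi> s0"
    using xz(3) s0(1) by auto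
  have le: "\<forall>s\<in>X. u s \<le> u s + (if s \<in> {a..b} then u s - \<psi> s else 0)"
    using \<psi>(2) by auto
  have gap: "\<forall>s\<in>{x..z}. u s + (u s0 - \<psi> s0) \<le> u s + (if s \<in> {a..b} then u s - \<psi> s else 0)"
    using s0(2) xz(2) by auto
  show ?thesis
    using affine_on_if_vex_eq[OF u le vex xz(1) order_trans[OF xz(2) sub] \<delta> gap] .
qed

lemma max_line_if_affine_where_above:
  fixes u \<psi> :: "real \<Rightarrow> real"
  assumes u: "convex_on X u" and sub: "{a..b} \<subseteq> X" and \<psi>: "\<forall>x\<in>{a..b}. \<psi> x \<le> u x"
    and gap_interval: "is_interval {x\<in>{a..b}. \<psi> x < u x}"
    and y: "y0 \<in> {x\<in>{a..b}. \<psi> x < u x}" "y1 \<in> {x\<in>{a..b}. \<psi> x < u x}" "y0 < y1"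
    and on_gap: "\<forall>t\<in>{x\<in>{a..b}. \<psi> x < u x}. u t = m * t + k"
  shows "\<forall>x\<in>{a..b}. u x = max (\<psi> x) (m * x + k)"
proof
  fix x assume x: "x \<in> {a..b}"
  show "u x = max (\<psi> x) (m * x + k)"
  proof (cases "\<psi> x < u x")
    case True
    then have "u x = m * x + k"
      using bspec[OF on_gap, of x] x by blast
    with True show ?thesis by (simp add: max_def)
  next
    case False
    then have "\<psi> x = u x"
      using \<psi> x by force
    moreover have "x \<le> y0 \<or> y1 \<le> x"
      using mem_is_interval_1_I[OF gap_interval y(1,2), of x] False by force
    moreover have "u y0 = m * y0 + k" "u y1 = m * y1 + k"
      using bspec[OF on_gap y(1)] bspec[OF on_gap y(2)] by blast+
    moreover have "y0 \<in> X" "y1 \<in> X" "x \<in> X"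
      using y x sub by auto
    ultimately show ?thesis
      using convex_on_ge_secant_outside[OF u _ _ _ y(3)] by simp
  qed
qed

lemma max_line_if_vex_eq:
  fixes u \<psi> :: "real \<Rightarrow> real"
  assumes u: "convex_on X u" "continuous_on X u" and ab: "0 \<le> a" "a \<le> b" "b \<le> 1"
    and \<psi>: "continuous_on {a..b} \<psi>" "\<forall>x\<in>{a..b}. \<psi> x \<le> u x" "\<psi> a = u a" "\<psi> b = u b"
    and gap_interval: "is_interval {x\<in>{a..b}. \<psi> x < u x}"
    and vex: "\<forall>x\<in>X. vex (\<lambda>y. u y + (if y \<in> {a..b} then u y - \<psi> y else 0)) x = u x"
  shows "\<exists>m k. \<forall>x\<in>{a..b}. u x = max (\<psi> x) (m * x + k)"
proof -
  define J where "J = {x \<in> {a..b}. \<psi> x < u x}"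
  have sub: "{a..b} \<subseteq> X" using ab by auto
  show ?thesis
  proof (cases "J = {}")
    case True
    obtain s1 where s1: "\<forall>s\<in>{a..b}. \<psi> s1 \<le> \<psi> s"
      using continuous_attains_inf[OF compact_Icc _ \<psi>(1)] ab(2) by auto
    have "u x = max (\<psi> x) (0 * x + \<psi> s1)" if x: "x \<in> {a..b}" for x
    proof -
      have "\<psi> x \<le> u x" "\<not> \<psi> x < u x" "\<psi> s1 \<le> \<psi> x"
        using \<psi>(2) s1 x True by (auto simp: J_def)
      then show ?thesis by simp
    qed
    then show ?thesis by blast
  next
    case False
    then obtain y0 where y0: "y0 \<in> J" by blast
    have "y0 \<in> {a..b}" "0 < u y0 - \<psi> y0"
      using y0 by (auto simp: J_def)
    moreover have "y0 < b"
      using y0 \<psi>(4) by (auto simp: J_def less_le)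
    moreover have "continuous_on {a..b} (\<lambda>x. u x - \<psi> x)"
      using continuous_on_subset[OF u(2) sub] \<psi>(1) by (intro continuous_intros)
    ultimately obtain y1 where y01: "y0 < y1" "y1 \<le> b" "0 < u y1 - \<psi> y1"
      using exists_pos_right_of_pos[of a b "\<lambda>x. u x - \<psi> x" y0] by blast
    then have y1: "y1 \<in> J"
      using y0 by (auto simp: J_def)
    have "\<exists>m k. \<forall>t\<in>J. u t = m * t + k"
    proof (rule affine_on_interval_if_affine_on_subintervals[OF gap_interval[folded J_def] y0 y1 y01(1)])
      fix x z assume xz: "x \<in> J" "z \<in> J" "x < z"
      then have "{x..z} \<subseteq> J"
        using mem_is_interval_1_I[OF gap_interval[folded J_def] xz(1,2)] by auto
      then have "{x..z} \<subseteq> {a..b}" "\<forall>s\<in>{x..z}. \<psi> s < u s"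
        by (auto simp: J_def)
      then show "\<exists>m k. \<forall>s\<in>{x..z}. u s = m * s + k"
        by (rule affine_on_contact_free_subinterval[OF u ab(1,3) \<psi>(1,2) vex xz(3)])
    qed
    then obtain m k where on_J: "\<forall>t\<in>J. u t = m * t + k" by blast
    show ?thesis
      using max_line_if_affine_where_above[OF u(1) sub \<psi>(2) gap_interval
          y0[unfolded J_def] y1[unfolded J_def] y01(1) on_J[unfolded J_def]] by blast
  qed
qed

section \<open>The gap below the tangents at the ends of [a, b]\<close>

locale endpoint_tangents =
  fixes u :: "real \<Rightarrow> real" and s1 s2 a b :: real
  assumes u_cvx: "cvx u" and u_lines: "above_endpoint_lines u s1 s2"
    and interval: "0 \<le> a" "a < b" "b \<le> 1"
begin

definition tangent_max :: "real \<Rightarrow> real" where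
  "tangent_max x = max (t_right u a x) (t_left u b x)"

lemma u_convex: "convex_on X u" and u_continuous: "continuous_on X u"
  using u_cvx by (auto simp: cvx_def)

lemma rderiv_ge: "s1 \<le> rderiv u a" and t_right_le: "x \<in> X \<Longrightarrow> t_right u a x \<le> u x"
  using rderiv_bound_and_t_right_le[OF u_convex u_lines] interval by auto

lemma lderiv_le: "lderiv u b \<le> s2" and t_left_le: "x \<in> X \<Longrightarrow> t_left u b x \<le> u x"
  using lderiv_bound_and_t_left_le[OF u_convex u_lines] interval by auto

lemma tangent_max_le: "x \<in> X \<Longrightarrow> tangent_max x \<le> u x"
  using t_right_le t_left_le by (simp add: tangent_max_def)

lemma tangent_max_at_ends: "tangent_max a = u a" "tangent_max b = u b"
  using t_right_le[of b] t_left_le[of a] interval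
  by (auto simp: tangent_max_def t_right_def t_left_def)

lemma continuous_tangent_max: "continuous_on S tangent_max"
  unfolding tangent_max_def t_right_def t_left_def by (intro continuous_intros)

lemma g_ab_eq: "g_ab u a b x = (if x \<in> {a..b} then u x - tangent_max x else 0)"
  by (simp add: g_ab_def tangent_max_def)

lemma g_ab_nonneg: "x \<in> X \<Longrightarrow> 0 \<le> g_ab u a b x"
  using tangent_max_le by (simp add: g_ab_eq)

lemma g_ab_ends: "g_ab u a b 0 = 0" "g_ab u a b 1 = 0"
  using interval tangent_max_at_ends by (auto simp: g_ab_eq)

lemma convex_on_minus_g_ab: "convex_on X (\<lambda>x. u x - g_ab u a b x)"
proof -
  have tangent_max_conv: "convex_on X tangent_max"
    unfolding tangent_max_def t_right_def t_left_def
    by (intro convex_on_max) (auto intro: convex_onI simp: algebra_simps convex_real_interval)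
  define G1 where "G1 s = (if s \<in> {0..a} then max (tangent_max s) (u s) else tangent_max s)" for s
  have G1_conv: "convex_on X G1"
    unfolding G1_def using interval tangent_max_at_ends
    by (intro convex_on_glue_max tangent_max_conv convex_on_subset[OF u_convex])
      (auto simp: convex_real_interval)
  define G2 where "G2 s = (if s \<in> {b..1} then max (G1 s) (u s) else G1 s)" for s
  have G2_conv: "convex_on X G2"
    unfolding G2_def using interval tangent_max_at_ends
    by (intro convex_on_glue_max G1_conv convex_on_subset[OF u_convex])
      (auto simp: convex_real_interval G1_def)
  have "G2 x = u x - g_ab u a b x" if "x \<in> X" for x
    using that interval tangent_max_le[OF that] tangent_max_at_ends
    by (auto simp: G2_def G1_def g_ab_eq max_def)
  with G2_conv show ?thesis
    by (rule convex_on_cong)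
qed

lemma above_endpoint_lines_minus_g_ab: "above_endpoint_lines (\<lambda>x. u x - g_ab u a b x) s1 s2"
  unfolding above_endpoint_lines_def g_ab_ends
proof (intro ballI)
  fix y assume y: "y \<in> X"
  have ends: "u 0 + s1 * y \<le> u y" "u 1 - s2 * (1 - y) \<le> u y"
    and ends_ab: "u 0 + s1 * a \<le> u a" "u 1 - s2 * (1 - b) \<le> u b"
    using u_lines y interval unfolding above_endpoint_lines_def by auto
  show "u 0 - 0 + s1 * y \<le> u y - g_ab u a b y \<and> u 1 - 0 - s2 * (1 - y) \<le> u y - g_ab u a b y"
  proof (cases "y \<in> {a..b}")
    case True
    have "s1 * (y - a) \<le> rderiv u a * (y - a)" "lderiv u b * (b - y) \<le> s2 * (b - y)"
      using True rderiv_ge lderiv_le by (auto intro: mult_right_mono)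
    then have "u 0 + s1 * y \<le> t_right u a y" "u 1 - s2 * (1 - y) \<le> t_left u b y"
      using ends_ab by (auto simp: t_right_def t_left_def algebra_simps)
    then show ?thesis
      using True by (auto simp: g_ab_eq tangent_max_def)
  next
    case False
    then show ?thesis using ends by (auto simp: g_ab_eq)
  qed
qed

lemma gap_interval: "is_interval {x\<in>{a..b}. tangent_max x < u x}"
  unfolding is_interval_1
proof (intro ballI allI impI)
  fix x z y
  assume "x \<in> {x\<in>{a..b}. tangent_max x < u x}" "z \<in> {x\<in>{a..b}. tangent_max x < u x}"
    and "x \<le> y \<and> y \<le> z"
  then have xyz: "a \<le> x" "x \<le> b" "tangent_max x < u x" "a \<le> z" "z \<le> b" "tangent_max z < u z"
    "x \<le> y" "y \<le> z"
    by auto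
  define fa fb where "fa s = u s - t_right u a s" and "fb s = u s - t_left u b s" for s
  have conv: "convex_on {c..d} (\<lambda>s. u s + (r * s + q))" if "{c..d} \<subseteq> X" for c d r q
    using convex_on_subset[OF u_convex that]
    by (rule convex_on_add[OF _ convex_on_affine]) (simp_all add: convex_real_interval)
  have fa_eq: "fa = (\<lambda>s. u s + (- rderiv u a * s + (rderiv u a * a - u a)))"
    and fb_eq: "fb = (\<lambda>s. u s + (- lderiv u b * s + (lderiv u b * b - u b)))"
    by (auto simp: fa_def fb_def t_right_def t_left_def algebra_simps)
  have fa_conv: "convex_on {a..y} fa"
    unfolding fa_eq by (rule conv) (use xyz interval in auto)
  have fb_conv: "convex_on {y..b} fb"
    unfolding fb_eq by (rule conv) (use xyz interval in auto)
  have fa_nonneg: "0 \<le> fa y" and fb_nonneg: "0 \<le> fb y" and fa_a: "fa a = 0" and fb_b: "fb b = 0"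
    using t_right_le[of y] t_left_le[of y] xyz interval
    by (auto simp: fa_def fb_def t_right_def t_left_def)
  \<comment> \<open>u minus a supporting line is nonnegative, convex and zero at the contact point, hence monotone away from it.\<close>
  have "fa x \<le> max (fa a) (fa y)" "fb z \<le> max (fb y) (fb b)"
    using convex_on_le_max[OF fa_conv] convex_on_le_max[OF fb_conv] xyz by auto
  then have "fa x \<le> fa y" "fb z \<le> fb y"
    using fa_nonneg fb_nonneg fa_a fb_b by simp_all
  moreover have "0 < fa x" "0 < fb z"
    using xyz(3,6) by (auto simp: fa_def fb_def tangent_max_def)
  ultimately show "y \<in> {x\<in>{a..b}. tangent_max x < u x}"
    using xyz by (simp add: fa_def fb_def tangent_max_def)
qed

lemma h_ab_eq_zero_iff_max_line:
  "(\<forall>x\<in>X. h_ab u a b x = 0) \<longleftrightarrow> (\<exists>m k. \<forall>x\<in>{a..b}. u x = max (tangent_max x) (m * x + k))"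
proof -
  define \<phi> where "\<phi> = (\<lambda>y. u y + (if y \<in> {a..b} then u y - tangent_max y else 0))"
  have h: "h_ab u a b x = vex \<phi> x - u x" for x
    by (simp add: h_ab_def \<phi>_def g_ab_eq)
  have u_min: "u \<in> convex_minorants \<phi>"
    using u_convex g_ab_nonneg by (simp add: convex_minorants_def \<phi>_def g_ab_eq)
  have ab: "0 \<le> a" "a \<le> b" "b \<le> 1" and tm_le: "\<forall>x\<in>{a..b}. tangent_max x \<le> u x"
    using interval tangent_max_le by auto
  show ?thesis
  proof
    assume "\<forall>x\<in>X. h_ab u a b x = 0"
    then have "\<forall>x\<in>X. vex \<phi> x = u x" by (simp add: h)
    then show "\<exists>m k. \<forall>x\<in>{a..b}. u x = max (tangent_max x) (m * x + k)"
      using max_line_if_vex_eq[OF u_convex u_continuous ab continuous_tangent_max tm_le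
          tangent_max_at_ends gap_interval]
      unfolding \<phi>_def by blast
  next
    assume "\<exists>m k. \<forall>x\<in>{a..b}. u x = max (tangent_max x) (m * x + k)"
    then obtain m k where mk: "\<forall>x\<in>{a..b}. u x = max (tangent_max x) (m * x + k)" by blast
    have "vex \<phi> x \<le> u x" if x: "x \<in> X" for x
      unfolding vex_eq_SUP
    proof (rule cSUP_least)
      show "convex_minorants \<phi> \<noteq> {}" using u_min by blast
      fix G assume "G \<in> convex_minorants \<phi>"
      then have "convex_on X G" "\<forall>x\<in>X. G x \<le> \<phi> x"
        by (auto simp: convex_minorants_def)
      then show "G x \<le> u x"
        using convex_minorant_le_if_max_line[OF _ ab _ mk continuous_tangent_max
            tangent_max_at_ends x]
        unfolding \<phi>_def by blast
    qed
    then show "\<forall>x\<in>X. h_ab u a b x = 0"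
      using vex_ge[OF u_min] by (force simp: h)
  qed
qed

lemma three_lines_if_max_line:
  assumes "\<forall>x\<in>{a..b}. u x = max (tangent_max x) (m * x + k)"
  shows "\<exists>m0 c0 m1 c1 m2 c2. \<forall>x\<in>{a..b}. u x = max (m0 * x + c0) (max (m1 * x + c1) (m2 * x + c2))"
proof (intro exI ballI)
  fix x assume "x \<in> {a..b}"
  then have "u x = max (tangent_max x) (m * x + k)"
    using assms by blast
  moreover have "tangent_max x =
      max (rderiv u a * x + (u a - rderiv u a * a)) (lderiv u b * x + (u b - lderiv u b * b))"
    by (simp add: tangent_max_def t_right_def t_left_def algebra_simps)
  ultimately show "u x = max (rderiv u a * x + (u a - rderiv u a * a))
      (max (lderiv u b * x + (u b - lderiv u b * b)) (m * x + k))"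
    by (simp only: max.assoc)
qed

lemma max_line_if_three_lines:
  assumes u_eq: "\<forall>x\<in>{a..b}. u x = max (m0 * x + c0) (max (m1 * x + c1) (m2 * x + c2))"
  shows "\<exists>m k. \<forall>x\<in>{a..b}. u x = max (tangent_max x) (m * x + k)"
proof -
  define L where "L = {(m0, c0), (m1, c1), (m2, c2)}"
  define line where "line l x = fst l * x + snd l" for l :: "real \<times> real" and x
  have active: "(\<forall>l\<in>L. fst l * x + snd l \<le> u x) \<and> (\<exists>l\<in>L. fst l * x + snd l = u x)"
    if "x \<in> {a..b}" for x
    using u_eq that by (auto simp: L_def max_def)
  have "finite L" by (simp add: L_def)
  \<comment> \<open>The tangents at a and b are two of the three lines, so at most one further line remains.\<close>
  obtain i where i: "i \<in> L" "\<forall>x. t_right u a x = line i x"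
    using t_right_eq_active_line[OF \<open>finite L\<close> interval(2) active] unfolding line_def by blast
  obtain j where j: "j \<in> L" "\<forall>x. t_left u b x = line j x"
    using t_left_eq_active_line[OF \<open>finite L\<close> interval(2) active] unfolding line_def by blast
  have tangents: "tangent_max x = max (line i x) (line j x)" for x
    using i(2) j(2) by (simp add: tangent_max_def)
  show ?thesis
  proof (cases "i = j")
    case True
    have ends: "u a = line i a" "u b = line i b"
      using spec[OF i(2), of a] spec[OF j(2), of b] True by (simp_all add: t_right_def t_left_def)
    have "u x = line i x" if x: "x \<in> {a..b}" for x
      unfolding line_def
    proof (rule convex_on_eq_affine_if_ends[OF _ _ _ _ x])
      show "convex_on {a..b} u"
        using convex_on_subset[OF u_convex] interval by (auto simp: convex_real_interval)
      show "u a = fst i * a + snd i" "u b = fst i * b + snd i"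
        using ends by (simp_all add: line_def)
      show "\<forall>x\<in>{a..b}. fst i * x + snd i \<le> u x"
        using active i(1) by simp
    qed
    then show ?thesis
      using tangents True by (intro exI[of _ "fst i"] exI[of _ "snd i"]) (simp add: line_def)
  next
    case False
    then obtain l where l: "l \<in> L" "L \<subseteq> {i, j, l}"
      using i(1) j(1) unfolding L_def by blast
    have "u x = max (tangent_max x) (line l x)" if x: "x \<in> {a..b}" for x
    proof -
      obtain n where "n \<in> L" "line n x = u x"
        using active[OF x] by (auto simp: line_def)
      moreover have "line i x \<le> u x" "line j x \<le> u x" "line l x \<le> u x"
        using active[OF x] i(1) j(1) l(1) by (auto simp: line_def)
      ultimately show ?thesis
        using l(2) by (auto simp: tangents max_def)
    qed
    then show ?thesis
      by (intro exI[of _ "fst l"] exI[of _ "snd l"]) (simp add: line_def)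
  qed
qed

end

lemma g_ab_same_endpoints: "g_ab u a a x = 0"
  by (simp add: g_ab_def t_right_def t_left_def)

lemma g_ab_properties:
  assumes u: "cvx u" and lines: "above_endpoint_lines u s1 s2" and ab: "0 \<le> a" "a \<le> b" "b \<le> 1"
  shows "\<forall>x\<in>X. 0 \<le> g_ab u a b x" and "g_ab u a b 0 = 0" and "g_ab u a b 1 = 0"
    and "convex_on X (\<lambda>x. u x - g_ab u a b x)"
    and "above_endpoint_lines (\<lambda>x. u x - g_ab u a b x) s1 s2"
proof -
  have "(\<forall>x\<in>X. 0 \<le> g_ab u a b x) \<and> g_ab u a b 0 = 0 \<and> g_ab u a b 1 = 0 \<and>
    convex_on X (\<lambda>x. u x - g_ab u a b x) \<and> above_endpoint_lines (\<lambda>x. u x - g_ab u a b x) s1 s2"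
  proof (cases "a = b")
    case True
    then show ?thesis using u lines by (simp add: g_ab_same_endpoints cvx_def)
  next
    case False
    then interpret endpoint_tangents u s1 s2 a b
      using u lines ab by unfold_locales auto
    show ?thesis
      using g_ab_nonneg g_ab_ends convex_on_minus_g_ab above_endpoint_lines_minus_g_ab by blast
  qed
  then show "\<forall>x\<in>X. 0 \<le> g_ab u a b x" "g_ab u a b 0 = 0" "g_ab u a b 1 = 0"
    "convex_on X (\<lambda>x. u x - g_ab u a b x)" "above_endpoint_lines (\<lambda>x. u x - g_ab u a b x) s1 s2"
    by blast+
qed

lemma h_ab_eq_zero_iff_three_lines:
  assumes u: "cvx u" and lines: "above_endpoint_lines u s1 s2" and ab: "0 \<le> a" "a \<le> b" "b \<le> 1"
  shows "(\<forall>x\<in>X. h_ab u a b x = 0) \<longleftrightarrow>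
    (\<exists>m0 c0 m1 c1 m2 c2. \<forall>x\<in>{a..b}. u x = max (m0 * x + c0) (max (m1 * x + c1) (m2 * x + c2)))"
proof (cases "a = b")
  case True
  have "u \<in> convex_minorants u"
    using u by (simp add: convex_minorants_def cvx_def)
  then have "vex u x = u x" if "x \<in> X" for x
    using vex_ge vex_le that by (metis empty_iff order_antisym)
  then have "\<forall>x\<in>X. h_ab u a b x = 0"
    using True by (simp add: h_ab_def g_ab_same_endpoints)
  moreover have "\<forall>x\<in>{a..b}. u x = max (0 * x + u a) (max (0 * x + u a) (0 * x + u a))"
    using True by simp
  ultimately show ?thesis by blast
next
  case False
  then interpret endpoint_tangents u s1 s2 a b
    using u lines ab by unfold_locales auto
  show ?thesis
    using h_ab_eq_zero_iff_max_line three_lines_if_max_line max_line_if_three_lines by blast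
qed

theorem lemma8:
  fixes lo hi u :: "real \<Rightarrow> real" and s1 s2 a b :: real
  assumes "CFI_data lo hi s1 s2"
    and "u \<in> CFI lo hi s1 s2"
    and "0 \<le> a" and "a \<le> b" and "b \<le> 1"
    and "\<forall>x\<in>{a..b}. lo x < u x \<and> u x < hi x"
  shows "(\<forall>\<epsilon>\<in>{0..1}.
            cvx (\<lambda>x. u x + \<epsilon> * h_ab u a b x) \<and> subdiff_X (\<lambda>x. u x + \<epsilon> * h_ab u a b x) \<subseteq> {s1..s2} \<and>
            cvx (\<lambda>x. u x - \<epsilon> * h_ab u a b x) \<and> subdiff_X (\<lambda>x. u x - \<epsilon> * h_ab u a b x) \<subseteq> {s1..s2})
       \<and> ((\<forall>x\<in>X. h_ab u a b x = 0) \<longleftrightarrow>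
          (\<exists>m0 c0 m1 c1 m2 c2 :: real. \<forall>x\<in>{a..b}.
              u x = max (m0 * x + c0) (max (m1 * x + c1) (m2 * x + c2))))"
proof -
  (* Only the convexity and slope constraints of u matter. *)
  have u: "cvx u" and slopes: "subdiff_X u \<subseteq> {s1..s2}"
    using assms(2) by (auto simp: CFI_def)
  have lines: "above_endpoint_lines u s1 s2"
    by (rule above_endpoint_lines_if_subdiff_X_subset[OF u slopes])
  note g = g_ab_properties[OF u lines assms(3-5)]
  have "\<forall>\<epsilon>\<in>{0..1}.
          cvx (\<lambda>x. u x + \<epsilon> * h_ab u a b x) \<and> subdiff_X (\<lambda>x. u x + \<epsilon> * h_ab u a b x) \<subseteq> {s1..s2} \<and>
          cvx (\<lambda>x. u x - \<epsilon> * h_ab u a b x) \<and> subdiff_X (\<lambda>x. u x - \<epsilon> * h_ab u a b x) \<subseteq> {s1..s2}"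
    using vex_perturbation_cvx_slopes[OF u g] unfolding h_ab_def by auto
  with h_ab_eq_zero_iff_three_lines[OF u lines assms(3-5)] show ?thesis
    by blast
qed

end
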